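(* Let $k=2^{\ell}$ with $\ell\ge2$ an integer and $q=4k$. Let $f\in\mathbb F_q[X,Y]$ be a local permutation polynomial whose permutation polynomial tuple consists of the $q$ elements of the group $G_3=\{b^ja^i:0\le j\le 2k-1,\ 0\le i\le 1\}$ (in some order), where $a$ and $b$ are as defined below. Then $f$ has a companion.
   Context: The elements of $\mathbb F_q$ are enumerated as $\mathbb F_q=\{c_0,\dots,c_{q-1}\}$; $\mathfrak S_q$ is the symmetric group of permutations of $\mathbb F_q$, composed right to left, written in cycle notation. $a=(c_0,c_1)(c_2,c_3)\cdots(c_{q-2},c_{q-1})$ and $b=D_1D_2$, where $D_1$ is the $2k$-cycle whose entries in order are: for $i=0,1,\dots,\frac{k-2}{2}$ the pair $c_{2i},c_{2i+2k+1}$; then $c_{k+1},c_{3k}$; then for $j=0,1,\dots,\frac{k-4}{2}$ the pair $c_{k+2j+2},c_{3k+2j+2}$; and $D_2$ is the $2k$-cycle whose entries in order are: for $j=0,1,\dots,\frac{k-4}{2}$ the pair $c_{3k-2-2j},c_{2k-1-2j}$; then $c_{2k},c_k$; then for $i=0,1,\dots,\frac{k-2}{2}$ the pair $c_{4k-1-2i},c_{k-1-2i}$. ($G_3$ is a subgroup of $\mathfrak S_q$ of order $q$ whose non-identity elements have no fixed points.) Every function $\mathbb F_q^2\to\mathbb F_q$ is identified with the unique polynomial in $\mathbb F_q[X,Y]$ of degree $<q$ in each variable representing it. $f$ is a local permutation polynomial (LPP) if $x\mapsto f(x,y_0)$ and $y\mapsto f(x_0,y)$ are permutations of $\mathbb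 F_q$ for all $x_0,y_0$. A permutation polynomial tuple is $(\beta_0,\dots,\beta_{q-1})\in\mathfrak S_q^q$ such that $\beta_i^{-1}\beta_j$ has no fixed point whenever $i\ne j$; LPPs $f$ correspond bijectively to such tuples via $f(x,\beta_i(x))=c_i$ for all $x$ and all $i$. Two LPPs $f,g$ are orthogonal (companions) if for every $(u,v)\in\mathbb F_q^2$ the system $f(X,Y)=u$, $g(X,Y)=v$ has exactly one solution in $\mathbb F_q^2$; a companion of $f$ is an LPP orthogonal to $f$. *)

theory Defs
  imports Main "HOL-Combinatorics.Cycles"
begin

text \<open>Index lists of the two 2k-cycles D1 and D2 (entries are indices into the
enumeration c of F_q).\<close>

definition D1_idx :: "nat \<Rightarrow> nat list" where
  "D1_idx k =
     concat (map (\<lambda>i. [2*i, 2*i + 2*k + 1]) [0..<k div 2])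
     @ [k + 1, 3*k]
     @ concat (map (\<lambda>j. [k + 2*j + 2, 3*k + 2*j + 2]) [0..<(k - 2) div 2])"

definition D2_idx :: "nat \<Rightarrow> nat list" where
  "D2_idx k =
     concat (map (\<lambda>j. [3*k - 2 - 2*j, 2*k - 1 - 2*j]) [0..<(k - 2) div 2])
     @ [2*k, k]
     @ concat (map (\<lambda>i. [4*k - 1 - 2*i, k - 1 - 2*i]) [0..<k div 2])"

definition perm_a :: "(nat \<Rightarrow> 'a) \<Rightarrow> nat \<Rightarrow> 'a \<Rightarrow> 'a" where
  "perm_a c q = foldr (\<lambda>m g. cycle_of_list [c (2*m), c (2*m+1)] \<circ> g) [0..<q div 2] id"

definition perm_b :: "(nat \<Rightarrow> 'a) \<Rightarrow> nat \<Rightarrow> 'a \<Rightarrow> 'a" where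
  "perm_b c k = cycle_of_list (map c (D1_idx k)) \<circ> cycle_of_list (map c (D2_idx k))"

definition G3 :: "(nat \<Rightarrow> 'a) \<Rightarrow> nat \<Rightarrow> ('a \<Rightarrow> 'a) set" where
  "G3 c k = {(perm_b c k ^^ j) \<circ> (perm_a c (4*k) ^^ i) | j i. j \<le> 2*k - 1 \<and> i \<le> 1}"

text \<open>Functions F_q^2 -> F_q (identified with reduced polynomials), curried.\<close>
definition is_LPP :: "('a \<Rightarrow> 'a \<Rightarrow> 'a) \<Rightarrow> bool" where
  "is_LPP f \<longleftrightarrow> (\<forall>y. bij (\<lambda>x. f x y)) \<and> (\<forall>x. bij (\<lambda>y. f x y))"

definition is_ppt :: "nat \<Rightarrow> ('a \<Rightarrow> 'a) list \<Rightarrow> bool" where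
  "is_ppt q \<beta> \<longleftrightarrow> length \<beta> = q \<and> (\<forall>i<q. bij (\<beta> ! i)) \<and>
     (\<forall>i<q. \<forall>j<q. i \<noteq> j \<longrightarrow> (\<forall>x. (inv (\<beta> ! i) \<circ> (\<beta> ! j)) x \<noteq> x))"

definition ppt_of :: "(nat \<Rightarrow> 'a) \<Rightarrow> nat \<Rightarrow> ('a \<Rightarrow> 'a \<Rightarrow> 'a) \<Rightarrow> ('a \<Rightarrow> 'a) list \<Rightarrow> bool" where
  "ppt_of c q f \<beta> \<longleftrightarrow> is_ppt q \<beta> \<and> (\<forall>i<q. \<forall>x. f x ((\<beta> ! i) x) = c i)"

definition orthogonal :: "('a \<Rightarrow> 'a \<Rightarrow> 'a) \<Rightarrow> ('a \<Rightarrow> 'a \<Rightarrow> 'a) \<Rightarrow> bool" where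
  "orthogonal f g \<longleftrightarrow> (\<forall>u v. \<exists>!p. f (fst p) (snd p) = u \<and> g (fst p) (snd p) = v)"

definition has_companion :: "('a \<Rightarrow> 'a \<Rightarrow> 'a) \<Rightarrow> bool" where
  "has_companion f \<longleftrightarrow> (\<exists>g. is_LPP g \<and> orthogonal f g)"

end

theory Submission
  imports Defs
begin

text \<open>
  The tuple of \<open>f\<close> is the group \<open>G\<^sub>3 = \<langle>a, b\<rangle>\<close>, a copy of the semidihedral group
  \<open>SD\<^sub>4\<^sub>k = \<langle>a, b | a^2 = b^(2k) = 1, aba = b^(k-1)\<rangle>\<close>; as quotients of distinct entries
  of a permutation polynomial tuple are fixed-point-free and \<open>|G\<^sub>3| = q\<close>, it acts regularly
  on \<open>\<bbbF>\<^sub>q\<close>. If an LPP has a regular permutation group \<open>G\<close> as its tuple, then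
  \<open>f(h x\<^sub>0, k x\<^sub>0)\<close> depends only on \<open>k h\<^sup>-\<^sup>1\<close>, and any orthomorphism \<open>\<theta>\<close> of \<open>G\<close>
  (a permutation with \<open>h \<mapsto> \<theta>(h) h\<^sup>-\<^sup>1\<close> injective) yields the companion
  \<open>g(h x\<^sub>0, k x\<^sub>0) = k \<theta>(h)\<^sup>-\<^sup>1 x\<^sub>0\<close>. For \<open>SD\<^sub>4\<^sub>k\<close> the map
  \<open>\<theta>(b^j a^e) = b^(\<lfloor>j/2\<rfloor> + ek) a^(j+e)\<close> is an orthomorphism because \<open>k\<close> is prime to 3.
  The relations between \<open>a\<close> and \<open>b\<close> are checked on closed forms for the entries of the two
  cycles of \<open>b\<close>: \<open>a\<close> maps the \<open>t\<close>-th entry of one cycle to the \<open>p(t)\<close>-th entry of the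
  other, and \<open>p(t + 1) \<equiv> p(t) + k - 1 (mod 2k)\<close>.
\<close>


section \<open>Companions from orthomorphisms\<close>

lemma is_LPP_if_inj:
  fixes f :: "'a::finite \<Rightarrow> 'a \<Rightarrow> 'a"
  assumes "\<And>y. inj (\<lambda>x. f x y)" "\<And>x. inj (\<lambda>y. f x y)"
  shows "is_LPP f"
  using assms finite_UNIV_inj_surj[of "\<lambda>x. f x _"] finite_UNIV_inj_surj[of "\<lambda>y. f _ y"]
  unfolding is_LPP_def bij_def by auto

lemma orthogonal_if_inj_pair:
  fixes f g :: "'a::finite \<Rightarrow> 'a \<Rightarrow> 'a"
  assumes inj: "inj (\<lambda>(x, y). (f x y, g x y))"
  shows "orthogonal f g"
  unfolding orthogonal_def
proof (intro allI)
  fix u v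
  have "surj (\<lambda>(x, y). (f x y, g x y))" using finite_UNIV_inj_surj[OF _ inj] by simp
  then obtain p where p: "(\<lambda>(x, y). (f x y, g x y)) p = (u, v)" by (metis surjD)
  show "\<exists>!p. f (fst p) (snd p) = u \<and> g (fst p) (snd p) = v"
  proof
    show "f (fst p) (snd p) = u \<and> g (fst p) (snd p) = v" using p by (auto split: prod.splits)
    fix p' assume "f (fst p') (snd p') = u \<and> g (fst p') (snd p') = v"
    then have "(\<lambda>(x, y). (f x y, g x y)) p' = (\<lambda>(x, y). (f x y, g x y)) p"
      using p by (auto split: prod.splits)
    then show "p' = p" by (rule injD[OF inj])
  qed
qed

text \<open>Inverse-free form of: \<open>\<theta>\<close> permutes \<open>G\<close> and \<open>h \<mapsto> \<theta>(h) h\<^sup>-\<^sup>1\<close> is injective.\<close>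

definition orthomorphism :: "'g set \<Rightarrow> ('g \<Rightarrow> 'g \<Rightarrow> 'g) \<Rightarrow> ('g \<Rightarrow> 'g) \<Rightarrow> bool" where
  "orthomorphism G mul \<theta> \<longleftrightarrow> \<theta> ` G \<subseteq> G \<and> inj_on \<theta> G \<and>
     (\<forall>u\<in>G. \<forall>h\<in>G. \<forall>h'\<in>G. \<theta> h = mul u h \<longrightarrow> \<theta> h' = mul u h' \<longrightarrow> h = h')"

locale regular_action =
  fixes G :: "'g set" and mul :: "'g \<Rightarrow> 'g \<Rightarrow> 'g" and act :: "'g \<Rightarrow> 'a::finite \<Rightarrow> 'a"
  assumes act_regular: "\<And>x. bij_betw (\<lambda>s. act s x) G UNIV"
    and inj_act: "\<And>s. s \<in> G \<Longrightarrow> inj (act s)"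
    and mul_closed: "\<And>s t. s \<in> G \<Longrightarrow> t \<in> G \<Longrightarrow> mul s t \<in> G"
    and act_mul: "\<And>s t. s \<in> G \<Longrightarrow> t \<in> G \<Longrightarrow> act (mul s t) = act s \<circ> act t"
begin

definition transporter :: "'a \<Rightarrow> 'a \<Rightarrow> 'g" where
  "transporter x y = the_inv_into G (\<lambda>s. act s x) y"

lemma transporter_in [simp]: "transporter x y \<in> G"
  unfolding transporter_def
  using bij_betw_apply[OF bij_betw_the_inv_into[OF act_regular]] by simp

lemma act_transporter [simp]: "act (transporter x y) x = y"
  unfolding transporter_def using f_the_inv_into_f_bij_betw[OF act_regular] by simp

lemma act_cancel: "s \<in> G \<Longrightarrow> t \<in> G \<Longrightarrow> act s x = act t x \<Longrightarrow> s = t"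
  using bij_betw_imp_inj_on[OF act_regular] by (blast dest: inj_onD)

lemma transporter_eqI: "s \<in> G \<Longrightarrow> act s x = y \<Longrightarrow> transporter x y = s"
  using act_cancel[of "transporter x y" s x] by simp

lemma mul_transporter: "h \<in> G \<Longrightarrow> k \<in> G \<Longrightarrow> mul (transporter (act h x) (act k x)) h = k"
  using act_cancel[of _ k x] mul_closed act_mul by simp

text \<open>With \<open>x = h x\<^sub>0\<close> and \<open>y = k x\<^sub>0\<close>, the companion takes the value \<open>k \<theta>(h)\<^sup>-\<^sup>1 x\<^sub>0\<close>.\<close>
definition companion :: "('g \<Rightarrow> 'g) \<Rightarrow> 'a \<Rightarrow> 'a \<Rightarrow> 'a \<Rightarrow> 'a" where
  "companion \<theta> x\<^sub>0 x y = act (transporter (act (\<theta> (transporter x\<^sub>0 x)) x\<^sub>0) y) x\<^sub>0"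

lemma companion_LPP:
  assumes "\<theta> ` G \<subseteq> G" "inj_on \<theta> G"
  shows "is_LPP (companion \<theta> x\<^sub>0)"
proof (rule is_LPP_if_inj)
  fix y show "inj (\<lambda>x. companion \<theta> x\<^sub>0 x y)"
  proof (rule injI)
    fix x x'
    let ?z = "act (\<theta> (transporter x\<^sub>0 x)) x\<^sub>0" and ?z' = "act (\<theta> (transporter x\<^sub>0 x')) x\<^sub>0"
    assume "companion \<theta> x\<^sub>0 x y = companion \<theta> x\<^sub>0 x' y"
    then have "transporter ?z y = transporter ?z' y"
      unfolding companion_def by (rule act_cancel[rotated 2]) simp_all
    then have "act (transporter ?z y) ?z = act (transporter ?z y) ?z'" by (metis act_transporter)
    then have "?z = ?z'" by (rule injD[OF inj_act[OF transporter_in]])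
    moreover have "\<theta> (transporter x\<^sub>0 x) \<in> G" "\<theta> (transporter x\<^sub>0 x') \<in> G" using assms(1) by auto
    ultimately have "\<theta> (transporter x\<^sub>0 x) = \<theta> (transporter x\<^sub>0 x')" by (blast intro: act_cancel)
    then have "transporter x\<^sub>0 x = transporter x\<^sub>0 x'" by (rule inj_onD[OF assms(2)]) simp_all
    then show "x = x'" by (metis act_transporter)
  qed
next
  fix x show "inj (\<lambda>y. companion \<theta> x\<^sub>0 x y)"
    unfolding companion_def by (rule injI) (metis act_cancel act_transporter transporter_in)
qed

lemma companion_pair_inj:
  assumes "is_LPP f" and f_const: "\<And>s x x'. s \<in> G \<Longrightarrow> f x (act s x) = f x' (act s x')"
    and \<theta>: "orthomorphism G mul \<theta>"
  shows "inj (\<lambda>(x, y). (f x y, companion \<theta> x\<^sub>0 x y))"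
proof (rule injI, clarsimp)
  fix x y x' y'
  assume f_eq: "f x y = f x' y'" and g_eq: "companion \<theta> x\<^sub>0 x y = companion \<theta> x\<^sub>0 x' y'"
  define h h' where "h = transporter x\<^sub>0 x" and "h' = transporter x\<^sub>0 x'"
  define u u' where "u = transporter x (act (\<theta> h) x\<^sub>0)" and "u' = transporter x' (act (\<theta> h') x\<^sub>0)"
  define t where "t = transporter (act (\<theta> h) x\<^sub>0) y"
  define s where "s = transporter x y"
  have G: "h \<in> G" "h' \<in> G" "u \<in> G" "u' \<in> G" "t \<in> G" "s \<in> G" "\<theta> h \<in> G" "\<theta> h' \<in> G"
    using \<theta> unfolding h_def h'_def u_def u'_def t_def s_def orthomorphism_def by auto
  have x: "x = act h x\<^sub>0" "x' = act h' x\<^sub>0" unfolding h_def h'_def by simp_all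
  have t': "t = transporter (act (\<theta> h') x\<^sub>0) y'"
    using g_eq unfolding companion_def t_def h_def h'_def by (rule act_cancel[rotated 2]) simp_all
  have "f x (act s x) = f x' y'" using f_eq unfolding s_def by simp
  then have "f x (act s x) = f x (act (transporter x' y') x)"
    using f_const[of "transporter x' y'" x' x] by simp
  then have "act s x = act (transporter x' y') x"
    using \<open>is_LPP f\<close> unfolding is_LPP_def by (metis bij_is_inj injD)
  then have s': "s = transporter x' y'" by (rule act_cancel[OF G(6) transporter_in])
  have "act (mul t u) x = y" using G act_mul unfolding t_def u_def by simp
  then have su: "s = mul t u" unfolding s_def using G mul_closed by (blast intro: transporter_eqI)
  have "act (mul t u') x' = y'" using G act_mul unfolding t' u'_def by simp
  then have su': "s = mul t u'" unfolding s' using G mul_closed by (blast intro: transporter_eqI)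
  have "act t (act u x\<^sub>0) = act t (act u' x\<^sub>0)" using su su' G act_mul by (metis comp_apply)
  then have "u = u'" using G by (blast intro: act_cancel injD[OF inj_act])
  have "\<theta> h = mul u h" using mul_transporter[of h "\<theta> h" x\<^sub>0] G unfolding u_def x(1) by simp
  moreover have "\<theta> h' = mul u h'"
    using mul_transporter[of h' "\<theta> h'" x\<^sub>0] G unfolding \<open>u = u'\<close> u'_def x(2) by simp
  ultimately have "h = h'" using \<theta> G unfolding orthomorphism_def by blast
  then show "x = x' \<and> y = y'" using x s' act_transporter unfolding s_def by metis
qed

lemma has_companion_if_orthomorphism:
  assumes "is_LPP f" "\<And>s x x'. s \<in> G \<Longrightarrow> f x (act s x) = f x' (act s x')"
    and "orthomorphism G mul \<theta>"
  shows "has_companion f"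
proof -
  have "is_LPP (companion \<theta> undefined)" \<comment> \<open>any base point will do\<close>
    using assms(3) unfolding orthomorphism_def by (blast intro: companion_LPP)
  moreover have "orthogonal f (companion \<theta> undefined)"
    by (rule orthogonal_if_inj_pair[OF companion_pair_inj[OF assms]])
  ultimately show ?thesis unfolding has_companion_def by blast
qed

end

lemma ppt_values_distinct:
  assumes "is_ppt q \<beta>" "i < q" "j < q" "i \<noteq> j"
  shows "(\<beta> ! i) x \<noteq> (\<beta> ! j) x"
proof
  assume "(\<beta> ! i) x = (\<beta> ! j) x"
  then have "(inv (\<beta> ! i) \<circ> (\<beta> ! j)) x = x"
    using assms(1,2) unfolding is_ppt_def by (metis bij_is_inj comp_apply inv_f_f)
  then show False using assms unfolding is_ppt_def by blast
qed

lemma distinct_ppt: "is_ppt q \<beta> \<Longrightarrow> distinct \<beta>"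
  unfolding distinct_conv_nth using ppt_values_distinct by (metis is_ppt_def)

lemma ppt_regular:
  assumes "is_ppt q \<beta>" "card (UNIV :: 'a::finite set) = q"
  shows "bij_betw (\<lambda>\<sigma>. \<sigma> x) (set \<beta>) (UNIV :: 'a set)"
proof -
  have "length \<beta> = q" using assms(1) unfolding is_ppt_def by simp
  then have inj: "inj_on (\<lambda>\<sigma>. \<sigma> x) (set \<beta>)"
    using ppt_values_distinct[OF assms(1)] by (fastforce simp: inj_on_def in_set_conv_nth)
  have "card ((\<lambda>\<sigma>. \<sigma> x) ` set \<beta>) = card (UNIV :: 'a set)"
    using card_image[OF inj] distinct_card[OF distinct_ppt[OF assms(1)]] \<open>length \<beta> = q\<close> assms(2) by simp
  then show ?thesis
    using inj card_eq_UNIV_imp_eq_UNIV[OF finite_UNIV] unfolding bij_betw_def by blast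
qed

lemma ppt_of_const_on_graph:
  assumes "ppt_of c q f \<beta>" "\<sigma> \<in> set \<beta>"
  shows "f x (\<sigma> x) = f x' (\<sigma> x')"
  using assms unfolding ppt_of_def is_ppt_def by (metis in_set_conv_nth)

lemma regular_action_of_ppt:
  fixes act :: "'g \<Rightarrow> 'a::finite \<Rightarrow> 'a"
  assumes "is_ppt q \<beta>" "card (UNIV :: 'a set) = q" "set \<beta> = act ` G" "finite G" "card G = q"
    and "\<And>s t. s \<in> G \<Longrightarrow> t \<in> G \<Longrightarrow> mul s t \<in> G"
    and "\<And>s t. s \<in> G \<Longrightarrow> t \<in> G \<Longrightarrow> act (mul s t) = act s \<circ> act t"
  shows "regular_action G mul act"
proof
  have "card (act ` G) = card G"
    using assms(1,3,5) distinct_card[OF distinct_ppt[OF assms(1)]] unfolding is_ppt_def by simp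
  then have "bij_betw act G (set \<beta>)"
    using assms(3,4) eq_card_imp_inj_on unfolding bij_betw_def by blast
  then show "bij_betw (\<lambda>s. act s x) G UNIV" for x
    using bij_betw_trans[OF _ ppt_regular[OF assms(1,2)]] by (simp add: comp_def)
  show "inj (act s)" if "s \<in> G" for s
    using that assms(1,3) unfolding is_ppt_def by (metis bij_is_inj image_eqI in_set_conv_nth)
qed (use assms(6,7) in simp_all)

section \<open>The semidihedral group and its orthomorphism\<close>

text \<open>\<open>(j, e)\<close> stands for \<open>b^j a^e\<close> in \<open>\<langle>a, b | a^2 = b^(2k) = 1, aba = b^(k-1)\<rangle>\<close>.\<close>

definition sd_elems :: "nat \<Rightarrow> (nat \<times> nat) set" where
  "sd_elems k = {..<2*k} \<times> {..<2}"

definition sd_mul :: "nat \<Rightarrow> nat \<times> nat \<Rightarrow> nat \<times> nat \<Rightarrow> nat \<times> nat" where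
  "sd_mul k s t =
     ((fst s + (if snd s = 0 then fst t else (k - 1) * fst t)) mod (2*k), (snd s + snd t) mod 2)"

definition sd_act :: "('a \<Rightarrow> 'a) \<Rightarrow> ('a \<Rightarrow> 'a) \<Rightarrow> nat \<times> nat \<Rightarrow> 'a \<Rightarrow> 'a" where
  "sd_act A B s = B ^^ fst s \<circ> A ^^ snd s"

definition sd_theta :: "nat \<Rightarrow> nat \<times> nat \<Rightarrow> nat \<times> nat" where
  "sd_theta k h = (fst h div 2 + snd h * k, (fst h mod 2 + snd h) mod 2)"

lemma sd_mul_in: "0 < k \<Longrightarrow> sd_mul k s t \<in> sd_elems k"
  unfolding sd_elems_def sd_mul_def by simp

lemma comp_funpow_twisted:
  assumes "A \<circ> B = B ^^ r \<circ> A"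
  shows "A \<circ> B ^^ j = B ^^ (r * j) \<circ> A"
proof (induction j)
  case 0 then show ?case by simp
next
  case (Suc j)
  have "A \<circ> B ^^ Suc j = (A \<circ> B) \<circ> B ^^ j" by (simp add: funpow_Suc_right o_assoc)
  also have "\<dots> = B ^^ r \<circ> (A \<circ> B ^^ j)" using assms by (simp add: o_assoc)
  also have "\<dots> = B ^^ r \<circ> B ^^ (r * j) \<circ> A" by (simp only: Suc.IH comp_assoc)
  also have "\<dots> = B ^^ (r * Suc j) \<circ> A" by (simp add: funpow_add[symmetric] add.commute)
  finally show ?case .
qed

lemma funpow_mod_period: "B ^^ n = id \<Longrightarrow> B ^^ (m mod n) = B ^^ m"
  by (rule ext, rule funpow_mod_eq) simp

lemma sd_act_mul:
  assumes A: "A \<circ> A = id" and B: "B ^^ (2*k) = id" and AB: "A \<circ> B = B ^^ (k - 1) \<circ> A"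
    and "s \<in> sd_elems k" "t \<in> sd_elems k"
  shows "sd_act A B (sd_mul k s t) = sd_act A B s \<circ> sd_act A B t"
proof -
  obtain j e j' e' where st: "s = (j, e)" "t = (j', e')" "e < 2" "e' < 2"
    using assms(4,5) unfolding sd_elems_def by auto
  have A_mod: "A ^^ (n mod 2) = A ^^ n" for n
    using funpow_mod_period[where B = A and n = 2] A by (simp add: numeral_2_eq_2)
  note B_mod = funpow_mod_period[OF B]
  show ?thesis
  proof (cases "e = 0")
    case True
    have "sd_act A B s \<circ> sd_act A B t = B ^^ (j + j') \<circ> A ^^ (e + e')"
      using True st unfolding sd_act_def by (simp add: o_assoc funpow_add)
    then show ?thesis using True st A_mod B_mod unfolding sd_act_def sd_mul_def by simp
  next
    case False
    then have e: "e = 1" using st by simp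
    have "sd_act A B s \<circ> sd_act A B t = B ^^ j \<circ> (A \<circ> B ^^ j') \<circ> A ^^ e'"
      using e st unfolding sd_act_def by (simp add: o_assoc)
    also have "\<dots> = B ^^ (j + (k - 1) * j') \<circ> A ^^ (e + e')"
      using comp_funpow_twisted[OF AB] e by (simp add: o_assoc funpow_add funpow_Suc_right[symmetric])
    finally show ?thesis using e st A_mod B_mod unfolding sd_act_def sd_mul_def by simp
  qed
qed

lemma dvd_abs_less_imp_zero:
  fixes n d :: int
  assumes "n dvd d" "\<bar>d\<bar> < n"
  shows "d = 0"
proof (rule ccontr)
  assume "d \<noteq> 0"
  then have "\<bar>n\<bar> \<le> \<bar>d\<bar>" using assms(1) by (rule dvd_imp_le_int)
  then show False using assms(2) by linarith
qed

lemma eq_if_dvd_combination: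
  fixes m m' e e' k :: nat and r :: int
  assumes dvd: "int (2*k) dvd (int m - int m') * r + (int e - int e') * int k"
    and "coprime (int k) r" "m < k" "m' < k" "e < 2" "e' < 2"
  shows "m = m' \<and> e = e'"
proof -
  have "int k dvd (int m - int m') * r + (int e - int e') * int k"
    using dvd by (rule dvd_trans[rotated]) simp
  then have "int k dvd (int m - int m') * r" by (simp add: dvd_add_left_iff)
  then have "int k dvd int m - int m'" using coprime_dvd_mult_left_iff[OF assms(2)] by blast
  then have m: "m = m'" using dvd_abs_less_imp_zero assms(3,4) by fastforce
  have "\<bar>(int e - int e') * int k\<bar> < int (2*k)" using assms(3,5,6) by (auto simp: abs_mult)
  moreover have "int (2*k) dvd (int e - int e') * int k" using dvd m by simp
  ultimately have "(int e - int e') * int k = 0" using dvd_abs_less_imp_zero by blast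
  then show ?thesis using m assms(3) by simp
qed

lemma sd_theta_in: "h \<in> sd_elems k \<Longrightarrow> sd_theta k h \<in> sd_elems k"
proof -
  assume "h \<in> sd_elems k"
  then have "fst h div 2 < k" "snd h = 0 \<or> snd h = 1" unfolding sd_elems_def by auto
  then show ?thesis unfolding sd_theta_def sd_elems_def by auto
qed

lemma sd_theta_parity:
  assumes "(j, e) \<in> sd_elems k" "(a, b) \<in> sd_elems k" "sd_theta k (j, e) = sd_mul k (a, b) (j, e)"
  shows "j mod 2 = b"
proof -
  have "(j mod 2 + e) mod 2 = (b + e) mod 2" using assms(3) unfolding sd_theta_def sd_mul_def by simp
  moreover have "b < 2" "e < 2" using assms(1,2) unfolding sd_elems_def by auto
  ultimately show ?thesis by presburger
qed

lemma sd_theta_dvd: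
  assumes "(j, e) \<in> sd_elems k" "sd_theta k (j, e) = sd_mul k (a, b) (j, e)"
  shows "int (2*k) dvd int (a + (if b = 0 then j else (k - 1) * j)) - int (j div 2 + e * k)"
proof -
  define X where "X = (if b = 0 then j else (k - 1) * j)"
  have "j div 2 + e * k < 2*k" using sd_theta_in[OF assms(1)] unfolding sd_theta_def sd_elems_def by simp
  moreover have "j div 2 + e * k = (a + X) mod (2*k)"
    using assms(2) unfolding sd_theta_def sd_mul_def X_def by simp
  ultimately have "(a + X) mod (2*k) = (j div 2 + e * k) mod (2*k)" by simp
  then have "int (a + X) mod int (2*k) = int (j div 2 + e * k) mod int (2*k)" by (metis of_nat_mod)
  then show ?thesis unfolding X_def[symmetric] by (simp add: mod_eq_dvd_iff)
qed

lemma sd_theta_orth: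
  assumes "coprime (int k) 3"
    and h: "(j, e) \<in> sd_elems k" "(j', e') \<in> sd_elems k" and u: "(a, b) \<in> sd_elems k"
    and eq: "sd_theta k (j, e) = sd_mul k (a, b) (j, e)" "sd_theta k (j', e') = sd_mul k (a, b) (j', e')"
  shows "(j, e) = (j', e')"
proof -
  define m m' where "m = j div 2" and "m' = j' div 2"
  define X where "X i = (if b = 0 then i else (k - 1) * i)" for i
  have par: "j mod 2 = b" "j' mod 2 = b" using sd_theta_parity h u eq by blast+
  have bounds: "m < k" "m' < k" "e < 2" "e' < 2" "b < 2"
    using h u unfolding sd_elems_def m_def m'_def by auto
  have "int (2*k) dvd (int (a + X j) - int (m + e * k)) - (int (a + X j') - int (m' + e' * k))"
    using dvd_diff[OF sd_theta_dvd[OF h(1) eq(1)] sd_theta_dvd[OF h(2) eq(2)]]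
    unfolding X_def m_def m'_def .
  then have d: "int (2*k) dvd int (X j) - int (X j') - (int m - int m') - (int e - int e') * int k"
    by (simp add: algebra_simps)
  have "m = m' \<and> e = e'"
  proof (cases "b = 0")
    case True
    then have "j = 2*m" "j' = 2*m'" using par unfolding m_def m'_def by presburger+
    then have "int (X j) - int (X j') - (int m - int m') - (int e - int e') * int k
        = - ((int m - int m') * (-1) + (int e - int e') * int k)"
      using True unfolding X_def by simp
    then have "int (2*k) dvd (int m - int m') * (-1) + (int e - int e') * int k"
      using d by (metis dvd_minus_iff)
    then show ?thesis by (rule eq_if_dvd_combination) (use bounds in simp_all)
  next
    case False
    then have j: "j = 2*m + 1" "j' = 2*m' + 1" using par bounds unfolding m_def m'_def by presburger+
    have X: "int (X i) = (int k - 1) * int i" for i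
    proof -
      have "X i = (k - 1) * i" using False unfolding X_def by simp
      moreover have "int (k - 1) = int k - 1" using bounds by simp
      ultimately show ?thesis by (metis of_nat_mult)
    qed
    have "int (X j) - int (X j') - (int m - int m') - (int e - int e') * int k
        = int (2*k) * (int m - int m') - ((int m - int m') * 3 + (int e - int e') * int k)"
      unfolding X j by (simp add: algebra_simps)
    then have "int (2*k) dvd (int m - int m') * 3 + (int e - int e') * int k"
      using d by (metis dvd_diff_right_iff dvd_triv_left)
    then show ?thesis by (rule eq_if_dvd_combination) (use assms(1) bounds in simp_all)
  qed
  then show ?thesis using par unfolding m_def m'_def by (metis div_mult_mod_eq)
qed

lemma sd_orthomorphism:
  assumes "coprime (int k) 3"
  shows "orthomorphism (sd_elems k) (sd_mul k) (sd_theta k)"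
  unfolding orthomorphism_def
proof (intro conjI ballI impI)
  show "sd_theta k ` sd_elems k \<subseteq> sd_elems k" using sd_theta_in by blast
  show "inj_on (sd_theta k) (sd_elems k)"
  proof (rule inj_onI, clarify)
    fix j e j' e' assume h: "(j, e) \<in> sd_elems k" "(j', e') \<in> sd_elems k"
      and eq: "sd_theta k (j, e) = sd_theta k (j', e')"
    have "j div 2 < k" "j' div 2 < k" "e = 0 \<or> e = 1" "e' = 0 \<or> e' = 1"
      using h unfolding sd_elems_def by auto
    moreover have "j div 2 + e * k = j' div 2 + e' * k" using eq unfolding sd_theta_def by simp
    ultimately have e: "e = e'" and div: "j div 2 = j' div 2" by auto
    have "(j mod 2 + e) mod 2 = (j' mod 2 + e) mod 2" using eq e unfolding sd_theta_def by simp
    then have "j mod 2 = j' mod 2" by presburger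
    then show "j = j' \<and> e = e'" using div e by (metis div_mult_mod_eq)
  qed
  show "h = h'" if "u \<in> sd_elems k" "h \<in> sd_elems k" "h' \<in> sd_elems k"
    "sd_theta k h = sd_mul k u h" "sd_theta k h' = sd_mul k u h'" for u h h'
    using sd_theta_orth[OF assms] that by (metis prod.collapse)
qed

section \<open>The permutations \<open>a\<close> and \<open>b\<close>\<close>

definition a_idx :: "nat \<Rightarrow> nat" where
  "a_idx i = (if even i then i+1 else i-1)"

lemma a_idx_div2 [simp]: "a_idx i div 2 = i div 2"
  unfolding a_idx_def by (auto elim: oddE)

lemma a_idx_a_idx [simp]: "a_idx (a_idx i) = i"
  unfolding a_idx_def by (auto elim: oddE)

lemma a_idx_less: "even q \<Longrightarrow> i < q \<Longrightarrow> a_idx i < q"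
  unfolding a_idx_def by presburger

lemma foldr_transpositions_apply:
  assumes "inj_on c {..<2*N}" "set ms \<subseteq> {..<N}" "distinct ms" "i < 2*N"
  shows "foldr (\<lambda>m g. cycle_of_list [c (2*m), c (2*m+1)] \<circ> g) ms id (c i)
    = (if i div 2 \<in> set ms then c (a_idx i) else c i)"
  using assms(2,3)
proof (induction ms)
  case Nil then show ?case by simp
next
  case (Cons m ms)
  have m: "m < N" using Cons.prems by simp
  have fixed: "cycle_of_list [c (2*m), c (2*m+1)] (c j) = c j" if "j < 2*N" "j div 2 \<noteq> m" for j
  proof -
    have "j \<noteq> 2*m" "j \<noteq> 2*m+1" using that by auto
    then have "c j \<noteq> c (2*m)" "c j \<noteq> c (2*m+1)"
      using inj_onD[OF assms(1)] m that(1) by fastforce+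
    then show ?thesis by (simp add: transpose_eq_iff)
  qed
  have swap: "cycle_of_list [c (2*m), c (2*m+1)] (c i) = c (a_idx i)" if "i div 2 = m"
    using that unfolding a_idx_def by (auto elim!: evenE oddE)
  show ?case
  proof (cases "i div 2 = m")
    case True
    then show ?thesis using Cons swap by auto
  next
    case False
    then show ?thesis
      using Cons fixed[of i] fixed[of "a_idx i"] a_idx_less[of "2*N" i] assms(4) by auto
  qed
qed

lemma perm_a_apply:
  assumes "inj_on c {..<q}" "even q" "i < q"
  shows "perm_a c q (c i) = c (a_idx i)"
proof -
  have q: "2 * (q div 2) = q" using assms(2) by simp
  have "i div 2 \<in> set [0..<q div 2]" using assms(2,3) by simp presburger
  then show ?thesis
    unfolding perm_a_def
    using foldr_transpositions_apply[of c "q div 2" "[0..<q div 2]" i] assms(1,3) q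
    by (auto simp: atLeast0LessThan)
qed

lemma bij_betw_enumerationE:
  assumes "bij_betw c {..<n} UNIV"
  obtains i where "i < n" "x = c i"
  using bij_betw_imp_surj_on[OF assms] by (metis imageE lessThan_iff UNIV_I)

lemma perm_a_involution:
  assumes "even q" "bij_betw c {..<q} UNIV"
  shows "perm_a c q \<circ> perm_a c q = id"
proof
  fix x
  obtain i where "i < q" "x = c i" using bij_betw_enumerationE[OF assms(2)] .
  then show "(perm_a c q \<circ> perm_a c q) x = id x"
    using perm_a_apply[OF bij_betw_imp_inj_on[OF assms(2)] assms(1)] a_idx_less[OF assms(1)] by simp
qed

lemma cycle_of_list_nth:
  assumes "distinct cs" "i < length cs"
  shows "cycle_of_list cs (cs ! i) = cs ! (Suc i mod length cs)"
proof -
  have "map (cycle_of_list cs) cs ! i = rotate 1 cs ! i"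
    using cyclic_rotation[OF assms(1), of 1] by simp
  then show ?thesis using assms(2) by (simp add: nth_rotate1)
qed

lemma disjoint_cycles_nth:
  assumes "distinct (cs @ ds)"
  shows "i < length cs \<Longrightarrow> (cycle_of_list cs \<circ> cycle_of_list ds) (cs ! i) = cs ! (Suc i mod length cs)"
    and "j < length ds \<Longrightarrow> (cycle_of_list cs \<circ> cycle_of_list ds) (ds ! j) = ds ! (Suc j mod length ds)"
proof -
  have d: "distinct cs" "distinct ds" "set cs \<inter> set ds = {}" using assms by auto
  show "(cycle_of_list cs \<circ> cycle_of_list ds) (cs ! i) = cs ! (Suc i mod length cs)" if "i < length cs"
  proof -
    have "cs ! i \<notin> set ds" using that d(3) nth_mem[OF that] by blast
    then show ?thesis using id_outside_supp[of "cs ! i" ds] cycle_of_list_nth[OF d(1) that] by simp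
  qed
  show "(cycle_of_list cs \<circ> cycle_of_list ds) (ds ! j) = ds ! (Suc j mod length ds)" if "j < length ds"
  proof -
    have "ds ! (Suc j mod length ds) \<in> set ds" using that by (intro nth_mem mod_less_divisor) linarith
    then show ?thesis
      using d id_outside_supp[of "ds ! (Suc j mod length ds)" cs] cycle_of_list_nth[OF d(2) that] by auto
  qed
qed

lemma funpow_apply_cyclic:
  assumes "\<And>t. t < n \<Longrightarrow> B (e t) = e (Suc t mod n)" "t < n"
  shows "(B ^^ m) (e t) = e ((t + m) mod n)"
proof (induction m)
  case 0 then show ?case using assms(2) by simp
next
  case (Suc m)
  have "(t + m) mod n < n" using assms(2) by simp
  then show ?case using Suc assms(1) by (simp add: mod_Suc_eq)
qed

text \<open>
  \<open>D1_entry k t\<close> and \<open>D2_entry k t\<close> are the \<open>t\<close>-th entries of \<open>D1_idx k\<close> and \<open>D2_idx k\<close>;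
  \<open>a\<close> maps the \<open>t\<close>-th entry of \<open>D1\<close> to the \<open>a_D1_pos k t\<close>-th entry of \<open>D2\<close>, and
  vice versa with \<open>a_D2_pos\<close>.
\<close>

definition D1_entry :: "nat \<Rightarrow> nat \<Rightarrow> nat" where
  "D1_entry k t = (if even t then (if t = k then k+1 else t)
     else (if t < k then t+2*k else if t = k+1 then 3*k else t+2*k-1))"

definition D2_entry :: "nat \<Rightarrow> nat \<Rightarrow> nat" where
  "D2_entry k t = (if odd t then (if t = k-1 then k else 2*k - t)
     else (if t < k-2 then 3*k-2-t else if t = k-2 then 2*k else 5*k-1-t))"

definition a_D1_pos :: "nat \<Rightarrow> nat \<Rightarrow> nat" where
  "a_D1_pos k t = (if even t then 2*k-1-t else if t < k then k-1-t else 3*k-1-t)"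

definition a_D2_pos :: "nat \<Rightarrow> nat \<Rightarrow> nat" where
  "a_D2_pos k t = (if a_D1_pos k t < k then a_D1_pos k t + k else a_D1_pos k t - k)"

text \<open>\<open>(t + 1) mod 2k\<close> and \<open>(p + k - 1) mod 2k\<close> written without \<open>mod\<close>, so that the
  simplifier can evaluate them on \<open>2x\<close> and \<open>2x + 1\<close>.\<close>

definition next_pos :: "nat \<Rightarrow> nat \<Rightarrow> nat" where
  "next_pos k t = (if t + 1 = 2*k then 0 else t + 1)"

definition shift_pos :: "nat \<Rightarrow> nat \<Rightarrow> nat" where
  "shift_pos k p = (if p + k - 1 < 2*k then p + k - 1 else p + k - 1 - 2*k)"

lemma next_pos_eq: "t < 2*k \<Longrightarrow> next_pos k t = Suc t mod (2*k)"
  unfolding next_pos_def by (auto simp: mod_if)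

lemma shift_pos_eq: "k \<ge> 1 \<Longrightarrow> p < 2*k \<Longrightarrow> shift_pos k p = (p + (k - 1)) mod (2*k)"
  unfolding shift_pos_def by (auto simp: mod_if le_mod_geq)

lemma nat_parity_cases: obtains s where "t = 2*s" | s where "t = Suc (2*s)"
  by (metis oddE evenE Suc_eq_plus1)

lemma entry_simps:
  "D1_entry (2*h) (2*x) = (if x = h then Suc (2*h) else 2*x)"
  "D1_entry (2*h) (Suc (2*x)) =
     (if x < h then Suc (2*(x+2*h)) else if x = h then 2*(3*h) else 2*(x+2*h))"
  "D1_entry (2*h) (Suc (Suc (2*x))) = (if Suc x = h then Suc (2*h) else Suc (Suc (2*x)))"
  "1 \<le> h \<Longrightarrow> D1_entry (2*h) 0 = 0"
  "2 \<le> h \<Longrightarrow> D1_entry (2*h) (Suc 0) = Suc (2*(2*h))"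
  "x < 2*h \<Longrightarrow> D2_entry (2*h) (2*x) =
     (if Suc x < h then 2*(3*h - Suc x) else if Suc x = h then 2*(2*h) else Suc (2*(5*h - Suc x)))"
  "x < 2*h \<Longrightarrow> D2_entry (2*h) (Suc (2*x)) = (if Suc x = h then 2*h else Suc (2*(2*h - Suc x)))"
  "Suc x < 2*h \<Longrightarrow> D2_entry (2*h) (Suc (Suc (2*x))) =
     (if Suc (Suc x) < h then 2*(3*h - Suc (Suc x))
      else if Suc (Suc x) = h then 2*(2*h) else Suc (2*(5*h - Suc (Suc x))))"
  "2 \<le> h \<Longrightarrow> D2_entry (2*h) 0 = 2*(3*h - 1)"
  "2 \<le> h \<Longrightarrow> D2_entry (2*h) (Suc 0) = Suc (2*(2*h - 1))"
  "x < 2*h \<Longrightarrow> a_D1_pos (2*h) (2*x) = Suc (2*(2*h - Suc x))"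
  "x < 2*h \<Longrightarrow> a_D1_pos (2*h) (Suc (2*x)) = (if x < h then 2*(h - Suc x) else 2*(3*h - Suc x))"
  "x < 2*h \<Longrightarrow> a_D2_pos (2*h) (2*x) =
     (if h \<le> x then Suc (2*(3*h - Suc x)) else Suc (2*(h - Suc x)))"
  "x < 2*h \<Longrightarrow> a_D2_pos (2*h) (Suc (2*x)) = 2*(2*h - Suc x)"
  "next_pos (2*h) (2*x) = Suc (2*x)"
  "next_pos (2*h) (Suc (2*x)) = (if Suc x = 2*h then 0 else 2*(Suc x))"
  "shift_pos (2*h) (Suc (2*x)) = (if x < h then 2*(x+h) else 2*(x - h))"
  "1 \<le> h \<Longrightarrow> shift_pos (2*h) (2*x) =
     (if x \<le> h then Suc (2*(x+h-1)) else Suc (2*(x-h-1)))"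
  "1 \<le> h \<Longrightarrow> shift_pos (2*h) 0 = Suc (2*(h - 1))"
  "2 \<le> h \<Longrightarrow> shift_pos (2*h) (Suc 0) = 2*h"
  unfolding D1_entry_def D2_entry_def a_D1_pos_def a_D2_pos_def next_pos_def shift_pos_def
  by auto presburger+

lemma D_entry_less: "h \<ge> 2 \<Longrightarrow> t < 4*h \<Longrightarrow> D1_entry (2*h) t < 8*h \<and> D2_entry (2*h) t < 8*h"
  by (cases t rule: nat_parity_cases) (simp_all add: entry_simps split: if_split; arith)+

lemma inj_on_D1_entry:
  assumes "h \<ge> 2" shows "inj_on (D1_entry (2*h)) {..<4*h}"
proof (rule inj_onI)
  fix t t' assume "t \<in> {..<4*h}" "t' \<in> {..<4*h}" "D1_entry (2*h) t = D1_entry (2*h) t'"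
  then show "t = t'" using assms
    by (cases t rule: nat_parity_cases; cases t' rule: nat_parity_cases)
      (auto simp: entry_simps split: if_splits; arith)+
qed

lemma inj_on_D2_entry:
  assumes "h \<ge> 2" shows "inj_on (D2_entry (2*h)) {..<4*h}"
proof (rule inj_onI)
  fix t t' assume "t \<in> {..<4*h}" "t' \<in> {..<4*h}" "D2_entry (2*h) t = D2_entry (2*h) t'"
  then show "t = t'" using assms
    by (cases t rule: nat_parity_cases; cases t' rule: nat_parity_cases)
      (auto simp: entry_simps split: if_splits; arith)+
qed

lemma D1_entry_ne_D2_entry:
  assumes "h \<ge> 2" "t < 4*h" "t' < 4*h"
  shows "D1_entry (2*h) t \<noteq> D2_entry (2*h) t'"
proof -
  define in_D1 where "in_D1 v \<longleftrightarrow> (even v \<and> v < 4*h \<and> v \<noteq> 2*h) \<or> v = Suc (2*h)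
      \<or> (odd v \<and> 4*h < v \<and> v < 6*h) \<or> v = 6*h \<or> (even v \<and> 6*h < v \<and> v < 8*h)" for v
  have "in_D1 (D1_entry (2*h) t)" using assms(1,2)
    by (cases t rule: nat_parity_cases) (simp_all add: in_D1_def entry_simps split: if_split; arith)+
  moreover have "\<not> in_D1 (D2_entry (2*h) t')" using assms(1,3)
    by (cases t' rule: nat_parity_cases) (simp_all add: in_D1_def entry_simps split: if_split; arith)+
  ultimately show ?thesis by auto
qed

lemma concat_map_pair:
  "concat (map (\<lambda>i. [f i, g i]) [0..<m]) = map (\<lambda>t. if even t then f (t div 2) else g (t div 2)) [0..<2*m]"
  by (induction m) (simp_all add: upt_Suc)

lemma D1_idx_eq:
  assumes "h \<ge> 2"
  shows "D1_idx (2*h) = map (D1_entry (2*h)) [0..<4*h]"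
proof -
  have shift: "map (\<lambda>r. r + (2*h+2)) [0..<2*(h-1)] = [2*h+2..<4*h]"
  proof -
    have "2*(h-1) + (2*h+2) = 4*h" using assms by simp
    then show ?thesis using map_add_upt[of "2*h+2" "2*(h-1)"] by metis
  qed
  have "[0..<4*h] = [0..<2*h] @ [2*h..<4*h]"
    using upt_add_eq_append[of 0 "2*h" "2*h"] by simp
  also have "[2*h..<4*h] = [2*h, 2*h+1] @ [2*h+2..<4*h]"
    using assms by (simp add: upt_conv_Cons)
  finally have upt: "[0..<4*h] = [0..<2*h] @ [2*h, 2*h+1] @ map (\<lambda>r. r + (2*h+2)) [0..<2*(h-1)]"
    unfolding shift .
  have first: "concat (map (\<lambda>i. [2*i, 2*i + 2*(2*h) + 1]) [0..<h]) = map (D1_entry (2*h)) [0..<2*h]"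
    unfolding concat_map_pair by (rule map_cong) (auto simp: D1_entry_def)
  have last: "concat (map (\<lambda>j. [2*h + 2*j + 2, 3*(2*h) + 2*j + 2]) [0..<h-1])
      = map (D1_entry (2*h)) (map (\<lambda>r. r + (2*h+2)) [0..<2*(h-1)])"
    unfolding concat_map_pair map_map by (rule map_cong) (auto simp: D1_entry_def)
  have half: "(2*h) div 2 = h" "(2*h - 2) div 2 = h - 1" by auto
  show ?thesis
    unfolding D1_idx_def half first last upt by (simp add: D1_entry_def)
qed

lemma D2_idx_eq:
  assumes "h \<ge> 2"
  shows "D2_idx (2*h) = map (D2_entry (2*h)) [0..<4*h]"
proof -
  have shift: "map (\<lambda>r. r + 2*h) [0..<2*h] = [2*h..<4*h]"
    using map_add_upt[of "2*h" "2*h"] by simp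
  have "[0..<4*h] = [0..<2*h] @ [2*h..<4*h]"
    using upt_add_eq_append[of 0 "2*h" "2*h"] by simp
  also have "[0..<2*h] = [0..<2*(h-1)] @ [2*h-2, 2*h-1]"
  proof -
    have "2*h = 2*(h-1) + 2" using assms by simp
    then have "[0..<2*h] = [0..<2*(h-1)] @ [2*(h-1)..<2*(h-1)+2]"
      by (metis upt_add_eq_append zero_le)
    also have "[2*(h-1)..<2*(h-1)+2] = [2*h-2, 2*h-1]"
      using assms by (simp add: upt_rec, arith)
    finally show ?thesis .
  qed
  finally have upt: "[0..<4*h] = [0..<2*(h-1)] @ [2*h-2, 2*h-1] @ map (\<lambda>r. r + 2*h) [0..<2*h]"
    unfolding shift by simp
  have first: "concat (map (\<lambda>j. [3*(2*h) - 2 - 2*j, 2*(2*h) - 1 - 2*j]) [0..<h-1])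
      = map (D2_entry (2*h)) [0..<2*(h-1)]"
    unfolding concat_map_pair by (rule map_cong) (auto simp: D2_entry_def)
  have last: "concat (map (\<lambda>i. [4*(2*h) - 1 - 2*i, 2*h - 1 - 2*i]) [0..<h])
      = map (D2_entry (2*h)) (map (\<lambda>r. r + 2*h) [0..<2*h])"
    unfolding concat_map_pair map_map by (rule map_cong) (auto simp: D2_entry_def)
  have half: "(2*h) div 2 = h" "(2*h - 2) div 2 = h - 1" by auto
  show ?thesis
    using assms unfolding D2_idx_def half first last upt by (simp add: D2_entry_def)
qed

lemma D_idx_distinct:
  assumes "h \<ge> 2" shows "distinct (D1_idx (2*h) @ D2_idx (2*h))"
  using inj_on_D1_entry[OF assms] inj_on_D2_entry[OF assms] D1_entry_ne_D2_entry[OF assms]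
  by (auto simp: D1_idx_eq[OF assms] D2_idx_eq[OF assms] distinct_map atLeast0LessThan)

lemma D_idx_set:
  assumes "h \<ge> 2" shows "set (D1_idx (2*h) @ D2_idx (2*h)) = {..<8*h}"
proof (rule card_subset_eq)
  show "set (D1_idx (2*h) @ D2_idx (2*h)) \<subseteq> {..<8*h}"
    using D_entry_less[OF assms] by (auto simp: D1_idx_eq[OF assms] D2_idx_eq[OF assms])
  show "card (set (D1_idx (2*h) @ D2_idx (2*h))) = card {..<8*h}"
    using distinct_card[OF D_idx_distinct[OF assms]]
    by (simp add: D1_idx_eq[OF assms] D2_idx_eq[OF assms])
qed simp

lemma D_entry_cases:
  assumes "h \<ge> 2" "i < 8*h"
  obtains t where "t < 4*h" "i = D1_entry (2*h) t" | t where "t < 4*h" "i = D2_entry (2*h) t"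
proof -
  have "i \<in> D1_entry (2*h) ` {..<4*h} \<union> D2_entry (2*h) ` {..<4*h}"
    using D_idx_set[OF assms(1)] assms(2)
    by (simp add: D1_idx_eq[OF assms(1)] D2_idx_eq[OF assms(1)] atLeast0LessThan)
  then show ?thesis using that by blast
qed

lemma a_D1_pos_less: "h \<ge> 2 \<Longrightarrow> t < 4*h \<Longrightarrow> a_D1_pos (2*h) t < 4*h"
  by (cases t rule: nat_parity_cases) (simp_all add: entry_simps split: if_split; arith)+

lemma a_D1_entry:
  "h \<ge> 2 \<Longrightarrow> t < 4*h \<Longrightarrow> a_idx (D1_entry (2*h) t) = D2_entry (2*h) (a_D1_pos (2*h) t)"
  by (cases t rule: nat_parity_cases) (simp_all add: entry_simps a_idx_def split: if_split; arith)+

lemma a_D1_entry_next: "h \<ge> 2 \<Longrightarrow> t < 4*h \<Longrightarrow>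
    a_idx (D1_entry (2*h) (next_pos (2*h) t)) = D2_entry (2*h) (shift_pos (2*h) (a_D1_pos (2*h) t))"
  by (cases t rule: nat_parity_cases) (simp_all add: entry_simps a_idx_def split: if_split; arith)+

lemma a_D2_pos_less: "h \<ge> 2 \<Longrightarrow> t < 4*h \<Longrightarrow> a_D2_pos (2*h) t < 4*h"
  by (cases t rule: nat_parity_cases) (simp_all add: entry_simps split: if_split; arith)+

lemma a_D2_entry:
  "h \<ge> 2 \<Longrightarrow> t < 4*h \<Longrightarrow> a_idx (D2_entry (2*h) t) = D1_entry (2*h) (a_D2_pos (2*h) t)"
  by (cases t rule: nat_parity_cases) (simp_all add: entry_simps a_idx_def split: if_split; arith)+

lemma a_D2_entry_next: "h \<ge> 2 \<Longrightarrow> t < 4*h \<Longrightarrow>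
    a_idx (D2_entry (2*h) (next_pos (2*h) t)) = D1_entry (2*h) (shift_pos (2*h) (a_D2_pos (2*h) t))"
  by (cases t rule: nat_parity_cases) (simp_all add: entry_simps a_idx_def split: if_split; arith)+

lemma funpow_perm_b_D_entry:
  assumes "h \<ge> 2" "inj_on c {..<8*h}" "t < 4*h"
  shows "(perm_b c (2*h) ^^ m) (c (D1_entry (2*h) t)) = c (D1_entry (2*h) ((t + m) mod (4*h)))"
    and "(perm_b c (2*h) ^^ m) (c (D2_entry (2*h) t)) = c (D2_entry (2*h) ((t + m) mod (4*h)))"
proof -
  let ?C1 = "map c (D1_idx (2*h))" and ?C2 = "map c (D2_idx (2*h))"
  have "distinct (map c (D1_idx (2*h) @ D2_idx (2*h)))"
    unfolding distinct_map using D_idx_distinct[OF assms(1)] D_idx_set[OF assms(1)] assms(2) by simp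
  then have dist: "distinct (?C1 @ ?C2)" by simp
  have len: "length ?C1 = 4*h" "length ?C2 = 4*h"
    by (simp_all add: D1_idx_eq[OF assms(1)] D2_idx_eq[OF assms(1)])
  have nth: "?C1 ! s = c (D1_entry (2*h) s)" "?C2 ! s = c (D2_entry (2*h) s)" if "s < 4*h" for s
    using that by (simp_all add: D1_idx_eq[OF assms(1)] D2_idx_eq[OF assms(1)])
  have "perm_b c (2*h) (?C1 ! s) = ?C1 ! (Suc s mod (4*h))"
    "perm_b c (2*h) (?C2 ! s) = ?C2 ! (Suc s mod (4*h))" if "s < 4*h" for s
    using disjoint_cycles_nth[OF dist] len that unfolding perm_b_def by simp_all
  then have "(perm_b c (2*h) ^^ m) (?C1 ! t) = ?C1 ! ((t + m) mod (4*h))"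
    "(perm_b c (2*h) ^^ m) (?C2 ! t) = ?C2 ! ((t + m) mod (4*h))"
    using funpow_apply_cyclic[where e = "(!) ?C1"] funpow_apply_cyclic[where e = "(!) ?C2"] assms(3)
    by blast+
  then show "(perm_b c (2*h) ^^ m) (c (D1_entry (2*h) t)) = c (D1_entry (2*h) ((t + m) mod (4*h)))"
    and "(perm_b c (2*h) ^^ m) (c (D2_entry (2*h) t)) = c (D2_entry (2*h) ((t + m) mod (4*h)))"
    using nth assms(3) by simp_all
qed

lemma perm_b_order:
  assumes "h \<ge> 2" "bij_betw c {..<8*h} UNIV"
  shows "perm_b c (2*h) ^^ (4*h) = id"
proof
  fix x
  obtain i where i: "i < 8*h" "x = c i" using bij_betw_enumerationE[OF assms(2)] .
  note b_pow = funpow_perm_b_D_entry[OF assms(1) bij_betw_imp_inj_on[OF assms(2)]]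
  from assms(1) i(1) show "(perm_b c (2*h) ^^ (4*h)) x = id x"
    by (cases rule: D_entry_cases) (simp_all add: i(2) b_pow)
qed

lemma perm_a_perm_b_twist:
  assumes "h \<ge> 2" "bij_betw c {..<8*h} UNIV"
  shows "perm_a c (8*h) \<circ> perm_b c (2*h) = perm_b c (2*h) ^^ (2*h - 1) \<circ> perm_a c (8*h)"
proof
  fix x
  obtain i where i: "i < 8*h" "x = c i" using bij_betw_enumerationE[OF assms(2)] .
  have inj: "inj_on c {..<8*h}" using bij_betw_imp_inj_on[OF assms(2)] .
  note b_pow = funpow_perm_b_D_entry[OF assms(1) inj]
  have a: "perm_a c (8*h) (c j) = c (a_idx j)" if "j < 8*h" for j
    using perm_a_apply[OF inj _ that] by simp
  have succ: "Suc t mod (4*h) = next_pos (2*h) t" if "t < 4*h" for t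
    using next_pos_eq[of t "2*h"] that by simp
  have shift: "(p + (2*h - 1)) mod (4*h) = shift_pos (2*h) p" if "p < 4*h" for p
    using shift_pos_eq[of "2*h" p] that assms(1) by simp
  from assms(1) i(1)
  show "(perm_a c (8*h) \<circ> perm_b c (2*h)) x = (perm_b c (2*h) ^^ (2*h - 1) \<circ> perm_a c (8*h)) x"
  proof (cases rule: D_entry_cases)
    case (1 t)
    let ?p = "a_D1_pos (2*h) t"
    have p: "?p < 4*h" using a_D1_pos_less assms(1) 1 by simp
    have "(perm_a c (8*h) \<circ> perm_b c (2*h)) x
        = perm_a c (8*h) (c (D1_entry (2*h) (next_pos (2*h) t)))"
      using b_pow[of t 1] 1 i(2) succ by simp
    also have "\<dots> = c (D2_entry (2*h) (shift_pos (2*h) ?p))"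
      using a D_entry_less a_D1_entry_next assms(1) 1 next_pos_eq by simp
    also have "\<dots> = (perm_b c (2*h) ^^ (2*h - 1)) (perm_a c (8*h) x)"
      using b_pow[of ?p "2*h - 1"] a D_entry_less a_D1_entry assms(1) 1 i(2) shift p by simp
    finally show ?thesis by simp
  next
    case (2 t)
    let ?p = "a_D2_pos (2*h) t"
    have p: "?p < 4*h" using a_D2_pos_less assms(1) 2 by simp
    have "(perm_a c (8*h) \<circ> perm_b c (2*h)) x
        = perm_a c (8*h) (c (D2_entry (2*h) (next_pos (2*h) t)))"
      using b_pow[of t 1] 2 i(2) succ by simp
    also have "\<dots> = c (D1_entry (2*h) (shift_pos (2*h) ?p))"
      using a D_entry_less a_D2_entry_next assms(1) 2 next_pos_eq by simp
    also have "\<dots> = (perm_b c (2*h) ^^ (2*h - 1)) (perm_a c (8*h) x)"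
      using b_pow[of ?p "2*h - 1"] a D_entry_less a_D2_entry assms(1) 2 i(2) shift p by simp
    finally show ?thesis by simp
  qed
qed

lemma G3_eq_sd_act_image:
  "0 < k \<Longrightarrow> G3 c k = sd_act (perm_a c (4*k)) (perm_b c k) ` sd_elems k"
proof -
  assume "0 < k"
  then have "(j \<le> 2*k - 1) = (j < 2*k)" for j by auto
  then show ?thesis unfolding G3_def sd_act_def sd_elems_def by force
qed

theorem theorem4p10:
  fixes f :: "'a::{field,finite} \<Rightarrow> 'a \<Rightarrow> 'a"
    and c :: "nat \<Rightarrow> 'a"
    and \<beta> :: "('a \<Rightarrow> 'a) list"
    and l k q :: nat
  assumes "l \<ge> 2" and "k = 2 ^ l" and "q = 4 * k"
    and "card (UNIV :: 'a set) = q"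
    and "bij_betw c {..<q} UNIV"
    and "is_LPP f"
    and "ppt_of c q f \<beta>"
    and "set \<beta> = G3 c k"
  shows "has_companion f"
proof -
  define h where "h = (2::nat) ^ (l - 1)"
  have k: "k = 2*h" "h \<ge> 2"
    using assms(1,2) unfolding h_def by (simp_all add: power_Suc[symmetric] self_le_power)
  have c: "bij_betw c {..<8*h} UNIV" using assms(3,5) k by simp
  let ?A = "perm_a c (4*k)" and ?B = "perm_b c k"
  have "?A \<circ> ?A = id" using perm_a_involution[of "4*k" c] assms(3,5) by simp
  moreover have "?B ^^ (2*k) = id" using perm_b_order[OF k(2) c] k by simp
  moreover have "?A \<circ> ?B = ?B ^^ (k - 1) \<circ> ?A" using perm_a_perm_b_twist[OF k(2) c] k by simp
  ultimately have "regular_action (sd_elems k) (sd_mul k) (sd_act ?A ?B)"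
    using assms(3,4,7,8) k G3_eq_sd_act_image[of k c] sd_mul_in[of k]
      sd_act_mul[where A = ?A and B = ?B and k = k]
    by (intro regular_action_of_ppt[where q = q and \<beta> = \<beta>])
      (auto simp: ppt_of_def sd_elems_def card_cartesian_product)
  moreover have "orthomorphism (sd_elems k) (sd_mul k) (sd_theta k)"
    using assms(2) by (intro sd_orthomorphism) (simp add: coprime_power_left_iff)
  ultimately show ?thesis
    using assms(6-8) k G3_eq_sd_act_image[of k c] ppt_of_const_on_graph[OF assms(7)]
    by (intro regular_action.has_companion_if_orthomorphism) auto
qed

end
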